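(* Let $\mathcal P$ and $\mathcal Q$ be binary quadratic operads over a field $\Bbbk$ with finite-dimensional spaces of generating operations, and suppose both are Dong operads. Then their Manin black product $\mathcal P\bullet\mathcal Q$ also satisfies the Dong Property.
   Context: A binary quadratic operad $\mathcal P(V,R)$ is generated by an $S_2$-module $V$ of binary operations subject to quadratic relations $R\subseteq\mathcal F_V(3)$. For $\mathcal P=\mathcal P(V,R)$, $\mathcal Q=\mathcal P(W,S)$, the Manin black product $\mathcal P\bullet\mathcal Q$ (Ginzburg–Kapranov) is the binary quadratic operad generated by $\Bbbk_-\otimes V\otimes W$ ($\Bbbk_-$ the sign representation of $S_2$) with relations the image of $\Bbbk_-\otimes R\otimes S$ under the natural projection $\Bbbk_-\otimes\mathcal F_V(3)\otimes\mathcal F_W(3)\to\mathcal F_{\Bbbk_-\otimes V\otimes W}(3)$. Formal distributions and the Dong Property: for an algebra $A$ with a family of bilinear operations closed under the $S_2$-action, a formal distribution over $A$ is $a(z)=\sum_{s\in\mathbb Z}a(s)z^{-s-1}$, $a(s)\in A$. Distributions $a,b$ are local if for every operation $*$ there is $N\ge0$ with $(w-z)^N a(w)*b(z)=0$ in $A[[z^{\pm1},w^{\pm1}]]$. For $n\in\mathbb Z_+$ the $n$-product is $(a\,{*}_{(n)}\,b)(w)=\mathrm{Res}_{\xi=0}(\xi-w)^n a(\xi)*b(w)$. An operad is a Dong operad (satisfies the Dong Property) if for every algebra $A$ over it and every three pairwise local distributions $a,b,c$ over $A$, the distributions $(a\,{*}_{(n)}\,b)$ and $c$ are local for all $n\in\mathbb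 Z_+$ and all operations $*$. *)

theory Defs
  imports "HOL-Computational_Algebra.Polynomial" "HOL-Combinatorics.Permutations"
begin

text \<open>V has basis indexed by the finite set gens. The S_2-action on V is the
  involution tau with tau e_i = sum_k swp k i e_k.
  F_V(3) is identified with functions r s i1 i2 (s < 3, i1,i2 in gens):
  the basis element of shape s is the tree mu_{i2}(mu_{i1}(x_s, x_{s+1}), x_{s+2})
  (indices mod 3); these 3 * dim(V)^2 trees form a basis of F_V(3).\<close>

record ('k,'i) bq_operad =
  gens :: "'i set"
  swp  :: "'i \<Rightarrow> 'i \<Rightarrow> 'k"
  rels :: "(nat \<Rightarrow> 'i \<Rightarrow> 'i \<Rightarrow> 'k) set"

definition free3 :: "'i set \<Rightarrow> (nat \<Rightarrow> 'i \<Rightarrow> 'i \<Rightarrow> 'k::zero) set" where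
  "free3 I = {r. \<forall>s i1 i2. (3 \<le> s \<or> i1 \<notin> I \<or> i2 \<notin> I) \<longrightarrow> r s i1 i2 = 0}"

text \<open>The S_3-action on F_V(3): sigma relabels the leaves x_p to x_(sigma p) and
  the result is rewritten in the basis using the S_2-action on the inner vertex.\<close>
definition act3 :: "('k::field,'i) bq_operad \<Rightarrow> (nat \<Rightarrow> nat) \<Rightarrow>
    (nat \<Rightarrow> 'i \<Rightarrow> 'i \<Rightarrow> 'k) \<Rightarrow> (nat \<Rightarrow> 'i \<Rightarrow> 'i \<Rightarrow> 'k)" where
  "act3 P \<sigma> r = (\<lambda>t k1 k2.
     if t < 3 \<and> k1 \<in> gens P \<and> k2 \<in> gens P then
       (\<Sum>s<3. if (\<sigma> ((s + 2) mod 3) + 1) mod 3 = t then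
                 (if \<sigma> ((s + 1) mod 3) = (\<sigma> s + 1) mod 3 then r s k1 k2
                  else (\<Sum>i\<in>gens P. swp P k1 i * r s i k2))
               else 0)
     else 0)"

definition is_bq_operad :: "('k::field,'i) bq_operad \<Rightarrow> bool" where
  "is_bq_operad P \<longleftrightarrow>
     finite (gens P) \<and>
     (\<forall>i\<in>gens P. \<forall>j\<in>gens P.
        (\<Sum>k\<in>gens P. swp P i k * swp P k j) = (if i = j then 1 else 0)) \<and>
     rels P \<subseteq> free3 (gens P) \<and>
     (\<lambda>_ _ _. 0) \<in> rels P \<and>
     (\<forall>r\<in>rels P. \<forall>r'\<in>rels P. (\<lambda>s i1 i2. r s i1 i2 + r' s i1 i2) \<in> rels P) \<and>
     (\<forall>r\<in>rels P. \<forall>c. (\<lambda>s i1 i2. c * r s i1 i2) \<in> rels P) \<and>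
     (\<forall>\<sigma>. \<sigma> permutes {0, 1, 2} \<longrightarrow> (\<forall>r\<in>rels P. act3 P \<sigma> r \<in> rels P))"

definition is_algebra :: "('k::field,'i) bq_operad \<Rightarrow> ('k \<Rightarrow> 'a::ab_group_add \<Rightarrow> 'a)
     \<Rightarrow> ('i \<Rightarrow> 'a \<Rightarrow> 'a \<Rightarrow> 'a) \<Rightarrow> bool" where
  "is_algebra P sc m \<longleftrightarrow> vector_space sc \<and>
     (\<forall>i\<in>gens P. \<forall>x y z c.
        m i (x + y) z = m i x z + m i y z \<and> m i x (y + z) = m i x y + m i x z \<and>
        m i (sc c x) y = sc c (m i x y) \<and> m i x (sc c y) = sc c (m i x y)) \<and>
     (\<forall>i\<in>gens P. \<forall>x y. m i y x = (\<Sum>k\<in>gens P. sc (swp P k i) (m k x y))) \<and>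
     (\<forall>r\<in>rels P. \<forall>x :: nat \<Rightarrow> 'a.
        (\<Sum>s<3. \<Sum>i1\<in>gens P. \<Sum>i2\<in>gens P.
           sc (r s i1 i2) (m i2 (m i1 (x s) (x ((s + 1) mod 3))) (x ((s + 2) mod 3)))) = 0)"

text \<open>The operation corresponding to the element v = sum_i c i e_i of V.\<close>
definition opr :: "('k::field,'i) bq_operad \<Rightarrow> ('k \<Rightarrow> 'a::ab_group_add \<Rightarrow> 'a)
     \<Rightarrow> ('i \<Rightarrow> 'a \<Rightarrow> 'a \<Rightarrow> 'a) \<Rightarrow> ('i \<Rightarrow> 'k) \<Rightarrow> 'a \<Rightarrow> 'a \<Rightarrow> 'a" where
  "opr P sc m c x y = (\<Sum>i\<in>gens P. sc (c i) (m i x y))"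

text \<open>Formal distributions a(z) = sum_s a(s) z^(-s-1) are represented by a :: int => 'a.
  Locality: the coefficient of w^(-s-1) z^(-t-1) in (w-z)^N a(w)*b(z) vanishes.\<close>
definition local_dist :: "('k::field,'i) bq_operad \<Rightarrow> ('k \<Rightarrow> 'a::ab_group_add \<Rightarrow> 'a)
     \<Rightarrow> ('i \<Rightarrow> 'a \<Rightarrow> 'a \<Rightarrow> 'a) \<Rightarrow> (int \<Rightarrow> 'a) \<Rightarrow> (int \<Rightarrow> 'a) \<Rightarrow> bool" where
  "local_dist P sc m a b \<longleftrightarrow>
     (\<forall>c. \<exists>N::nat. \<forall>s t::int.
        (\<Sum>k\<le>N. sc ((-1) ^ k * of_nat (N choose k))
                    (opr P sc m c (a (s + int N - int k)) (b (t + int k)))) = 0)"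

text \<open>n-product: (a *_(n) b)(w) = Res_xi (xi - w)^n a(xi) * b(w); coefficient at index t.\<close>
definition nprod :: "('k::field,'i) bq_operad \<Rightarrow> ('k \<Rightarrow> 'a::ab_group_add \<Rightarrow> 'a)
     \<Rightarrow> ('i \<Rightarrow> 'a \<Rightarrow> 'a \<Rightarrow> 'a) \<Rightarrow> ('i \<Rightarrow> 'k) \<Rightarrow> nat \<Rightarrow> (int \<Rightarrow> 'a) \<Rightarrow> (int \<Rightarrow> 'a)
     \<Rightarrow> (int \<Rightarrow> 'a)" where
  "nprod P sc m c n a b = (\<lambda>t.
     (\<Sum>k\<le>n. sc ((-1) ^ k * of_nat (n choose k))
                 (opr P sc m c (a (int n - int k)) (b (t + int k)))))"

definition dong_alg :: "('k::field,'i) bq_operad \<Rightarrow> ('k \<Rightarrow> 'a::ab_group_add \<Rightarrow> 'a)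
     \<Rightarrow> ('i \<Rightarrow> 'a \<Rightarrow> 'a \<Rightarrow> 'a) \<Rightarrow> bool" where
  "dong_alg P sc m \<longleftrightarrow>
     (\<forall>a b d. local_dist P sc m a b \<and> local_dist P sc m b d \<and> local_dist P sc m a d \<longrightarrow>
        (\<forall>c n. local_dist P sc m (nprod P sc m c n a b) d))"

text \<open>Dong property for all algebras whose underlying space is (a vector space structure on) the type 'a.\<close>
definition dong :: "('k::field,'i) bq_operad \<Rightarrow> 'a::ab_group_add itself \<Rightarrow> bool" where
  "dong P _ \<longleftrightarrow> (\<forall>(sc :: 'k \<Rightarrow> 'a \<Rightarrow> 'a) m. is_algebra P sc m \<longrightarrow> dong_alg P sc m)"

definition lin_span :: "(nat \<Rightarrow> 'i \<Rightarrow> 'i \<Rightarrow> 'k::field) set \<Rightarrow> (nat \<Rightarrow> 'i \<Rightarrow> 'i \<Rightarrow> 'k) set" where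
  "lin_span X = {f. \<exists>F c. finite F \<and> F \<subseteq> X \<and> f = (\<lambda>s u v. \<Sum>g\<in>F. c g * g s u v)}"

text \<open>Manin black product: generators k_- (x) V (x) W (S_2 acts by minus tau (x) tau),
  relations the image of k_- (x) R (x) S under the natural map, which on trees of the
  same shape is r (x) q |-> the tree with vertex labels tensored, and 0 on different shapes.\<close>
definition black :: "('k::field,'i) bq_operad \<Rightarrow> ('k,'j) bq_operad \<Rightarrow> ('k, 'i \<times> 'j) bq_operad" where
  "black P Q = \<lparr> gens = gens P \<times> gens Q,
      swp = (\<lambda>p p'. - (swp P (fst p) (fst p') * swp Q (snd p) (snd p'))),
      rels = lin_span {(\<lambda>s u v. r s (fst u) (fst v) * q s (snd u) (snd v)) | r q.
                         r \<in> rels P \<and> q \<in> rels Q} \<rparr>"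

end

theory Submission
  imports Defs "HOL-Library.Function_Algebras"
begin

text \<open>Call an operad \<^emph>\<open>shape-0 reducible\<close> if, modulo its relations, every tree
  \<open>\<mu>\<^sub>v(\<mu>\<^sub>u(x\<^sub>0, x\<^sub>1), x\<^sub>2)\<close> is a combination of trees of the other two shapes.
  Such an operad is Dong. Given pairwise local \<open>a, b, d\<close>, the reducing relation writes the
  family \<open>T(i, j, k) = \<mu>\<^sub>v(\<mu>\<^sub>u(a(i), b(j)), d(k))\<close> as minus a sum of two families built
  from products \<open>b \<cdot> d\<close> and \<open>d \<cdot> a\<close>. By the three localities, \<open>T\<close> and these two families
  are killed by powers of the commuting difference operators \<open>\<Delta>\<^sub>1\<^sub>2\<close>, \<open>\<Delta>\<^sub>2\<^sub>3\<close>,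
  \<open>\<Delta>\<^sub>1\<^sub>3\<close> respectively, and since \<open>\<Delta>\<^sub>2\<^sub>3 = \<Delta>\<^sub>1\<^sub>3 - \<Delta>\<^sub>1\<^sub>2\<close> a power of
  \<open>\<Delta>\<^sub>2\<^sub>3\<close> kills \<open>T\<close>; this is the locality of \<open>a\<^sub>(\<^sub>n\<^sub>) b\<close> and \<open>d\<close>.

  Conversely, if some tree of shape 0 is not reducible, a linear functional \<open>\<Phi>\<close> vanishing on the
  shape-0 parts of all relations but not on that tree defines an algebra on \<open>k[x]\<close> in which
  \<open>a = 1\<close>, \<open>b = x\<close> and \<open>d = \<delta>\<^sub>t\<^sub>,\<^sub>0 x\<^sup>2\<close> are pairwise local while \<open>a\<^sub>(\<^sub>0\<^sub>) b\<close> and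
  \<open>d\<close> are not. So the hypotheses are only needed for algebras on \<open>k[x]\<close>.

  Finally, products of reducing relations of \<open>P\<close> and \<open>Q\<close> are reducing relations of
  \<open>P \<bullet> Q\<close>.\<close>

section \<open>Commuting difference operators\<close>

lemma additive_funpow:
  fixes f :: "'a::ab_group_add \<Rightarrow> 'a"
  shows "additive f \<Longrightarrow> additive (f ^^ n)"
  by (induction n) (simp_all add: additive_def)

lemma additive_funpow_vanishes_mono:
  fixes f :: "'a::ab_group_add \<Rightarrow> 'a"
  assumes "additive f" "(f ^^ n) x = 0" "n \<le> n'"
  shows "(f ^^ n') x = 0"
proof -
  obtain d where "n' = d + n" using \<open>n \<le> n'\<close> by (metis le_add_diff_inverse2)
  then show ?thesis
    using assms(2) additive.zero[OF additive_funpow[OF assms(1)]] by (simp add: funpow_add)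
qed

lemma funpow_commute_single:
  assumes "\<And>x. f (g x) = g (f x)"
  shows "f ((g ^^ n) x) = (g ^^ n) (f x)"
  by (induction n) (simp_all add: assms)

lemma funpow_commute:
  assumes "\<And>x. f (g x) = g (f x)"
  shows "(f ^^ m) ((g ^^ n) x) = (g ^^ n) ((f ^^ m) x)"
  by (induction m) (simp_all add: funpow_commute_single[where f=f and g=g, OF assms])

text \<open>Expanding \<open>C\<^sup>a\<^sup>+\<^sup>b = (A - B)\<^sup>a\<^sup>+\<^sup>b\<close>, every term contains \<open>A\<^sup>a\<close> or \<open>B\<^sup>b\<close>.\<close>

lemma commuting_difference_pow_vanishes:
  fixes A B C :: "'a::ab_group_add \<Rightarrow> 'a"
  assumes add: "additive A" "additive B" and comm: "\<And>x. A (B x) = B (A x)"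
    and C: "\<And>x. C x = A x - B x"
    and "(A ^^ a) u = 0" and "(B ^^ b) ((C ^^ n) u) = 0"
  shows "(C ^^ (n + a + b)) u = 0"
  using assms(5,6)
proof (induction "a + b" arbitrary: a b u rule: less_induct)
  case less
  have addC: "additive C"
    using add by (simp add: additive_def C algebra_simps)
  have AC: "A (C x) = C (A x)" and BC: "B (C x) = C (B x)" for x
    using add comm by (simp_all add: C additive.diff)
  have zeroC: "(C ^^ k) 0 = 0" for k
    by (rule additive.zero[OF additive_funpow[OF addC]])
  consider "a = 0" | "b = 0" | a' b' where "a = Suc a'" "b = Suc b'"
    by (meson not0_implies_Suc)
  then show ?case
  proof cases
    case 1
    then show ?thesis using less.prems(1) zeroC by simp
  next
    case 2
    then have "(C ^^ (n + a + b)) u = (C ^^ a) ((C ^^ n) u)"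
      by (metis add.commute add_0_right comp_apply funpow_add)
    then show ?thesis using less.prems(2) 2 zeroC by simp
  next
    case 3
    have "(C ^^ (n + a' + b)) (A u) = 0"
    proof (rule less.hyps)
      show "a' + b < a + b" using 3 by simp
      show "(A ^^ a') (A u) = 0" using less.prems(1) 3 by (simp add: funpow_swap1)
      have "(B ^^ b) ((C ^^ n) (A u)) = A ((B ^^ b) ((C ^^ n) u))"
        by (simp add: funpow_commute_single[of A C, OF AC] funpow_commute_single[of A B, OF comm])
      then show "(B ^^ b) ((C ^^ n) (A u)) = 0"
        using less.prems(2) additive.zero[OF add(1)] by simp
    qed
    moreover have "(C ^^ (n + a + b')) (B u) = 0"
    proof (rule less.hyps)
      show "a + b' < a + b" using 3 by simp
      have "(A ^^ a) (B u) = B ((A ^^ a) u)"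
        by (simp add: funpow_commute_single[of B A, OF comm[symmetric]])
      then show "(A ^^ a) (B u) = 0" using less.prems(1) additive.zero[OF add(2)] by simp
      have "(B ^^ b') ((C ^^ n) (B u)) = (B ^^ b) ((C ^^ n) u)"
        using 3 by (simp add: funpow_commute_single[of B C, OF BC] funpow_swap1)
      then show "(B ^^ b') ((C ^^ n) (B u)) = 0" using less.prems(2) by simp
    qed
    moreover have "(C ^^ (n + a + b)) u = (C ^^ (n + a' + b)) (A u) - (C ^^ (n + a + b')) (B u)"
    proof -
      have "n + a + b = Suc (n + a' + b)" and "n + a' + b = n + a + b'" using 3 by simp_all
      then show ?thesis
        by (simp only: funpow_Suc_right o_apply C additive.diff[OF additive_funpow[OF addC]])
    qed
    ultimately show ?thesis by simp
  qed
qed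

lemma three_term_relation_vanishes:
  fixes A B C :: "'a::ab_group_add \<Rightarrow> 'a"
  assumes add: "additive A" "additive B" and comm: "\<And>x. A (B x) = B (A x)"
    and C: "\<And>x. C x = A x - B x"
    and rel: "t + v + w = 0"
    and t: "(B ^^ n) t = 0" and v: "(C ^^ n) v = 0" and w: "(A ^^ n) w = 0"
  shows "(C ^^ (3 * n)) t = 0"
proof -
  have addC: "additive C"
    using add by (simp add: additive_def C algebra_simps)
  have BC: "B (C x) = C (B x)" for x
    using add comm by (simp add: C additive.diff)
  note addCn = additive_funpow[OF addC] and addBn = additive_funpow[OF add(2)]
  have "w = - t - v"
    using rel by (simp add: eq_neg_iff_add_eq_0 algebra_simps)
  then have "(B ^^ n) ((C ^^ n) w) = - (C ^^ n) ((B ^^ n) t) - (B ^^ n) ((C ^^ n) v)"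
    by (simp add: additive.diff[OF addCn] additive.diff[OF addBn] additive.minus[OF addCn]
        additive.minus[OF addBn] funpow_commute[of B C, OF BC])
  then have "(B ^^ n) ((C ^^ n) w) = 0"
    using t v additive.zero[OF addCn] additive.zero[OF addBn] by simp
  then have "(C ^^ (n + n + n)) w = 0"
    by (rule commuting_difference_pow_vanishes[OF add comm C w])
  moreover have "(C ^^ (n + n + n)) v = 0"
    using v additive.zero[OF addCn] by (simp add: funpow_add)
  moreover have "t = - v - w" and "3 * n = n + n + n"
    using rel by (simp_all add: eq_neg_iff_add_eq_0 algebra_simps)
  ultimately show ?thesis
    by (simp only: additive.diff[OF addCn] additive.minus[OF addCn]) simp
qed

section \<open>Shift differences of families indexed by \<open>\<int>\<^sup>3\<close>\<close>

definition shift_diff ::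
    "int \<Rightarrow> int \<Rightarrow> int \<Rightarrow> int \<Rightarrow> int \<Rightarrow> int \<Rightarrow> (int \<Rightarrow> int \<Rightarrow> int \<Rightarrow> 'a::ab_group_add)
      \<Rightarrow> int \<Rightarrow> int \<Rightarrow> int \<Rightarrow> 'a" where
  "shift_diff p1 p2 p3 q1 q2 q3 F =
     (\<lambda>i j k. F (i + p1) (j + p2) (k + p3) - F (i + q1) (j + q2) (k + q3))"

text \<open>For the family \<open>a(i) b(j) d(k)\<close>, powers of these operators express the locality of the
  pairs \<open>(a, b)\<close>, \<open>(b, d)\<close> and \<open>(a, d)\<close>.\<close>

abbreviation "diff12 \<equiv> shift_diff 1 0 0 0 1 0"
abbreviation "diff23 \<equiv> shift_diff 0 1 0 0 0 1"
abbreviation "diff13 \<equiv> shift_diff 1 0 0 0 0 1"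

lemma additive_shift_diff: "additive (shift_diff p1 p2 p3 q1 q2 q3)"
  by standard (simp add: shift_diff_def fun_eq_iff algebra_simps)

lemma shift_diff_commute:
  "shift_diff p1 p2 p3 q1 q2 q3 (shift_diff p1' p2' p3' q1' q2' q3' F) =
   shift_diff p1' p2' p3' q1' q2' q3' (shift_diff p1 p2 p3 q1 q2 q3 F)"
  by (simp add: shift_diff_def fun_eq_iff algebra_simps add_ac)

lemma diff23_eq: "diff23 F = diff13 F - diff12 F"
  by (simp add: shift_diff_def fun_eq_iff)

lemma shift_diff_pow_vanishes_eventually:
  assumes "(shift_diff p1 p2 p3 q1 q2 q3 ^^ n) F = 0"
  shows "eventually (\<lambda>n. (shift_diff p1 p2 p3 q1 q2 q3 ^^ n) F = 0) sequentially"
  using additive_funpow_vanishes_mono[OF additive_shift_diff assms]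
  by (auto simp: eventually_sequentially)

lemma shift_diff_pow_combination:
  assumes "\<And>x i j k. L x (i + p1) (j + p2) (k + p3) = L x i j k"
    and "\<And>x i j k. L x (i + q1) (j + q2) (k + q3) = L x i j k"
    and "\<And>x i j k. additive (L x i j k)"
  shows "(shift_diff p1 p2 p3 q1 q2 q3 ^^ n) (\<lambda>i j k. \<Sum>x\<in>X. L x i j k (F x i j k)) =
    (\<lambda>i j k. \<Sum>x\<in>X. L x i j k ((shift_diff p1 p2 p3 q1 q2 q3 ^^ n) (F x) i j k))"
proof (induction n)
  case (Suc n)
  then show ?case
    by (simp add: shift_diff_def assms(1,2) additive.diff[OF assms(3)] sum_subtractf)
qed simp

lemma shift_diff_pow_combination_vanishes:
  assumes "\<And>x i j k. L x (i + p1) (j + p2) (k + p3) = L x i j k"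
    and "\<And>x i j k. L x (i + q1) (j + q2) (k + q3) = L x i j k"
    and "\<And>x i j k. additive (L x i j k)"
    and "\<And>x. x \<in> X \<Longrightarrow> (shift_diff p1 p2 p3 q1 q2 q3 ^^ n) (F x) = 0"
  shows "(shift_diff p1 p2 p3 q1 q2 q3 ^^ n) (\<lambda>i j k. \<Sum>x\<in>X. L x i j k (F x i j k)) = 0"
  unfolding shift_diff_pow_combination[where L=L, OF assms(1-3)]
  by (intro ext sum.neutral ballI) (simp add: assms(4) additive.zero[OF assms(3)])

definition signed_binomial :: "nat \<Rightarrow> nat \<Rightarrow> 'a::comm_ring_1" where
  "signed_binomial n l = (-1) ^ l * of_nat (n choose l)"

lemma signed_binomial_0 [simp]: "signed_binomial n 0 = 1"
  by (simp add: signed_binomial_def)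

lemma signed_binomial_eq_0 [simp]: "n < l \<Longrightarrow> signed_binomial n l = 0"
  by (simp add: signed_binomial_def binomial_eq_0)

lemma signed_binomial_Suc_Suc:
  "signed_binomial (Suc n) (Suc l) = signed_binomial n (Suc l) - signed_binomial n l"
  by (simp add: signed_binomial_def algebra_simps)

lemma (in vector_space) sum_signed_binomial_Suc:
  "(\<Sum>l\<le>Suc n. scale (signed_binomial (Suc n) l) (H (Suc n - l) l)) =
   (\<Sum>l\<le>n. scale (signed_binomial n l) (H (Suc n - l) l)) -
   (\<Sum>l\<le>n. scale (signed_binomial n l) (H (n - l) (Suc l)))"
proof -
  have "(\<Sum>l\<le>Suc n. scale (signed_binomial (Suc n) l) (H (Suc n - l) l)) =
      H (Suc n) 0 + (\<Sum>l\<le>n. scale (signed_binomial n (Suc l)) (H (n - l) (Suc l))) -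
      (\<Sum>l\<le>n. scale (signed_binomial n l) (H (n - l) (Suc l)))"
    by (subst sum.atMost_Suc_shift)
      (simp add: signed_binomial_Suc_Suc scale_left_diff_distrib sum_subtractf del: sum.atMost_Suc)
  moreover have "(\<Sum>l\<le>n. scale (signed_binomial n l) (H (Suc n - l) l)) =
      H (Suc n) 0 + (\<Sum>l\<le>n. scale (signed_binomial n (Suc l)) (H (n - l) (Suc l)))"
  proof -
    have "(\<Sum>l\<le>n. scale (signed_binomial n l) (H (Suc n - l) l)) =
        (\<Sum>l\<le>Suc n. scale (signed_binomial n l) (H (Suc n - l) l))"
      by simp
    then show ?thesis
      by (subst (asm) sum.atMost_Suc_shift) (simp del: sum.atMost_Suc)
  qed
  ultimately show ?thesis by simp
qed

lemma (in vector_space) shift_diff_pow_expand: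
  "(shift_diff p1 p2 p3 q1 q2 q3 ^^ n) F i j k =
   (\<Sum>l\<le>n. scale (signed_binomial n l)
      (F (i + int (n - l) * p1 + int l * q1) (j + int (n - l) * p2 + int l * q2)
         (k + int (n - l) * p3 + int l * q3)))"
proof (induction n arbitrary: F)
  case (Suc n)
  define H where "H u v = F (i + int u * p1 + int v * q1) (j + int u * p2 + int v * q2)
      (k + int u * p3 + int v * q3)" for u v
  have "(shift_diff p1 p2 p3 q1 q2 q3 ^^ Suc n) F i j k =
      (shift_diff p1 p2 p3 q1 q2 q3 ^^ n) (shift_diff p1 p2 p3 q1 q2 q3 F) i j k"
    by (simp only: funpow_Suc_right o_apply)
  also have "\<dots> = (\<Sum>l\<le>n. scale (signed_binomial n l) (H (Suc n - l) l - H (n - l) (Suc l)))"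
    unfolding Suc shift_diff_def H_def
    by (intro sum.cong refl) (auto simp: of_nat_diff algebra_simps Suc_diff_le)
  also have "\<dots> = (\<Sum>l\<le>Suc n. scale (signed_binomial (Suc n) l) (H (Suc n - l) l))"
    unfolding sum_signed_binomial_Suc by (simp add: scale_right_diff_distrib sum_subtractf)
  finally show ?case
    by (simp add: H_def)
qed simp

section \<open>Algebras and local distributions\<close>

lemma is_algebraD:
  assumes "is_algebra Op sc m"
  shows "vector_space sc"
    and "i \<in> gens Op \<Longrightarrow> m i (x + y) z = m i x z + m i y z"
    and "i \<in> gens Op \<Longrightarrow> m i (sc c x) y = sc c (m i x y)"
    and "i \<in> gens Op \<Longrightarrow> m i y x = (\<Sum>k\<in>gens Op. sc (swp Op k i) (m k x y))"
    and "r \<in> rels Op \<Longrightarrow> (\<Sum>s<3. \<Sum>i1\<in>gens Op. \<Sum>i2\<in>gens Op.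
           sc (r s i1 i2) (m i2 (m i1 (w s) (w ((s + 1) mod 3))) (w ((s + 2) mod 3)))) = 0"
  using assms unfolding is_algebra_def by blast+

lemma additive_opr_left:
  assumes "is_algebra Op sc m"
  shows "additive (\<lambda>x. opr Op sc m c x z)"
proof
  interpret vector_space sc by (rule is_algebraD(1)[OF assms])
  show "opr Op sc m c (x + y) z = opr Op sc m c x z + opr Op sc m c y z" for x y
    unfolding opr_def sum.distrib[symmetric]
    by (intro sum.cong refl) (simp add: is_algebraD(2)[OF assms] scale_right_distrib)
qed

lemma opr_scale_left:
  assumes "is_algebra Op sc m"
  shows "opr Op sc m c (sc a x) z = sc a (opr Op sc m c x z)"
proof -
  interpret vector_space sc by (rule is_algebraD(1)[OF assms])
  show ?thesis
    unfolding opr_def scale_sum_right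
    by (intro sum.cong refl) (simp add: is_algebraD(3)[OF assms] scale_left_commute)
qed

lemma opr_sum_scale_left:
  assumes "is_algebra Op sc m"
  shows "opr Op sc m c (\<Sum>x\<in>A. sc (f x) (g x)) z = (\<Sum>x\<in>A. sc (f x) (opr Op sc m c (g x) z))"
  by (simp add: additive.sum[OF additive_opr_left[OF assms]] opr_scale_left[OF assms])

lemma opr_indicator:
  assumes "vector_space sc" and "finite (gens Op)" and "u \<in> gens Op"
  shows "opr Op sc m (\<lambda>\<nu>. if \<nu> = u then 1 else 0) x y = m u x y"
proof -
  interpret vector_space sc by fact
  have "opr Op sc m (\<lambda>\<nu>. if \<nu> = u then 1 else 0) x y = (\<Sum>\<nu>\<in>gens Op. if \<nu> = u then m \<nu> x y else 0)"
    unfolding opr_def by (intro sum.cong refl) auto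
  then show ?thesis using assms by simp
qed

lemma local_dist_generator:
  assumes alg: "is_algebra Op sc m" and fin: "finite (gens Op)" and u: "u \<in> gens Op"
    and loc: "local_dist Op sc m a b"
  obtains n where
    "\<And>s t. (\<Sum>l\<le>n. sc (signed_binomial n l) (m u (a (s + int (n - l))) (b (t + int l)))) = 0"
proof -
  obtain n where n: "\<And>s t. (\<Sum>l\<le>n. sc ((-1) ^ l * of_nat (n choose l))
      (opr Op sc m (\<lambda>\<nu>. if \<nu> = u then 1 else 0) (a (s + int n - int l)) (b (t + int l)))) = 0"
    using loc unfolding local_dist_def by blast
  have "(\<Sum>l\<le>n. sc (signed_binomial n l) (m u (a (s + int (n - l))) (b (t + int l)))) = 0" for s t
  proof -
    have "(\<Sum>l\<le>n. sc (signed_binomial n l) (m u (a (s + int (n - l))) (b (t + int l)))) =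
        (\<Sum>l\<le>n. sc ((-1) ^ l * of_nat (n choose l))
          (opr Op sc m (\<lambda>\<nu>. if \<nu> = u then 1 else 0) (a (s + int n - int l)) (b (t + int l))))"
      by (intro sum.cong refl)
        (simp add: opr_indicator[OF is_algebraD(1)[OF alg] fin u] signed_binomial_def of_nat_diff
          add_diff_eq)
    then show ?thesis using n by simp
  qed
  then show ?thesis by (rule that)
qed

lemma pairwise_local_eventually_annihilated:
  assumes alg: "is_algebra Op sc m" and fin: "finite (gens Op)"
    and "local_dist Op sc m a b" "local_dist Op sc m b d" "local_dist Op sc m a d"
  shows "eventually (\<lambda>n. \<forall>u\<in>gens Op.
      (diff12 ^^ n) (\<lambda>i j k. m u (a i) (b j)) = 0 \<and>
      (diff23 ^^ n) (\<lambda>i j k. m u (b j) (d k)) = 0 \<and>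
      (diff13 ^^ n) (\<lambda>i j k. m u (a i) (d k)) = 0) sequentially"
proof (intro eventually_ball_finite[OF fin] ballI eventually_conj)
  interpret vector_space sc by (rule is_algebraD(1)[OF alg])
  fix u assume u: "u \<in> gens Op"
  obtain n1 where n1: "\<And>s t. (\<Sum>l\<le>n1. sc (signed_binomial n1 l)
      (m u (a (s + int (n1 - l))) (b (t + int l)))) = 0"
    using local_dist_generator[OF alg fin u assms(3)] by blast
  obtain n2 where n2: "\<And>s t. (\<Sum>l\<le>n2. sc (signed_binomial n2 l)
      (m u (b (s + int (n2 - l))) (d (t + int l)))) = 0"
    using local_dist_generator[OF alg fin u assms(4)] by blast
  obtain n3 where n3: "\<And>s t. (\<Sum>l\<le>n3. sc (signed_binomial n3 l)
      (m u (a (s + int (n3 - l))) (d (t + int l)))) = 0"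
    using local_dist_generator[OF alg fin u assms(5)] by blast
  show "eventually (\<lambda>n. (diff12 ^^ n) (\<lambda>i j k. m u (a i) (b j)) = 0) sequentially"
    by (rule shift_diff_pow_vanishes_eventually[where n=n1])
      (use n1 in \<open>simp add: fun_eq_iff shift_diff_pow_expand\<close>)
  show "eventually (\<lambda>n. (diff23 ^^ n) (\<lambda>i j k. m u (b j) (d k)) = 0) sequentially"
    by (rule shift_diff_pow_vanishes_eventually[where n=n2])
      (use n2 in \<open>simp add: fun_eq_iff shift_diff_pow_expand\<close>)
  show "eventually (\<lambda>n. (diff13 ^^ n) (\<lambda>i j k. m u (a i) (d k)) = 0) sequentially"
    by (rule shift_diff_pow_vanishes_eventually[where n=n3])
      (use n3 in \<open>simp add: fun_eq_iff shift_diff_pow_expand\<close>)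
qed

section \<open>Operads in which the first tree shape is reducible are Dong\<close>

definition shape0_reducible :: "('k::field, 'i) bq_operad \<Rightarrow> bool" where
  "shape0_reducible P \<longleftrightarrow> (\<forall>u\<in>gens P. \<forall>v\<in>gens P. \<exists>\<rho>\<in>rels P.
     \<forall>i1\<in>gens P. \<forall>i2\<in>gens P. \<rho> 0 i1 i2 = (if i1 = u \<and> i2 = v then 1 else 0))"

lemma sum_lessThan_3: "(\<Sum>s<3. f s) = f 0 + f 1 + f (2::nat)"
  by (simp add: numeral_3_eq_3 lessThan_Suc add_ac numeral_2_eq_2)

lemma reducing_relation_eq:
  assumes alg: "is_algebra Op sc m" and fin: "finite (gens Op)"
    and u: "u \<in> gens Op" and v: "v \<in> gens Op" and \<rho>: "\<rho> \<in> rels Op"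
    and \<rho>0: "\<And>i1 i2. i1 \<in> gens Op \<Longrightarrow> i2 \<in> gens Op \<Longrightarrow>
      \<rho> 0 i1 i2 = (if i1 = u \<and> i2 = v then 1 else 0)"
  shows "m v (m u x y) z + (\<Sum>i1\<in>gens Op. opr Op sc m (\<rho> 1 i1) (m i1 y z) x)
      + (\<Sum>i1\<in>gens Op. opr Op sc m (\<rho> 2 i1) (m i1 z x) y) = 0"
proof -
  interpret vector_space sc by (rule is_algebraD(1)[OF alg])
  define w where "w s = (if s = 0 then x else if s = 1 then y else z)" for s :: nat
  have "(\<Sum>i1\<in>gens Op. \<Sum>i2\<in>gens Op. sc (\<rho> 0 i1 i2) (m i2 (m i1 x y) z)) =
      (\<Sum>i1\<in>gens Op. if i1 = u then (\<Sum>i2\<in>gens Op. if i2 = v then m i2 (m i1 x y) z else 0) else 0)"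
    by (intro sum.cong refl) (auto simp: \<rho>0 intro!: sum.cong)
  also have "\<dots> = m v (m u x y) z"
    using fin u v by simp
  finally have shape0: "(\<Sum>i1\<in>gens Op. \<Sum>i2\<in>gens Op. sc (\<rho> 0 i1 i2) (m i2 (m i1 x y) z)) =
      m v (m u x y) z" .
  have "(\<Sum>i1\<in>gens Op. \<Sum>i2\<in>gens Op. sc (\<rho> 0 i1 i2) (m i2 (m i1 x y) z)) +
      (\<Sum>i1\<in>gens Op. \<Sum>i2\<in>gens Op. sc (\<rho> 1 i1 i2) (m i2 (m i1 y z) x)) +
      (\<Sum>i1\<in>gens Op. \<Sum>i2\<in>gens Op. sc (\<rho> 2 i1 i2) (m i2 (m i1 z x) y)) = 0"
    using is_algebraD(5)[OF alg \<rho>, of w] by (simp add: sum_lessThan_3 w_def)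
  then show ?thesis
    unfolding shape0 opr_def .
qed

lemma triple_product_annihilated:
  assumes alg: "is_algebra Op sc m" and fin: "finite (gens Op)"
    and u: "u \<in> gens Op" and v: "v \<in> gens Op" and \<rho>: "\<rho> \<in> rels Op"
    and \<rho>0: "\<And>i1 i2. i1 \<in> gens Op \<Longrightarrow> i2 \<in> gens Op \<Longrightarrow>
      \<rho> 0 i1 i2 = (if i1 = u \<and> i2 = v then 1 else 0)"
    and ab: "\<And>w. w \<in> gens Op \<Longrightarrow> (diff12 ^^ n) (\<lambda>i j k. m w (a i) (b j)) = 0"
    and bd: "\<And>w. w \<in> gens Op \<Longrightarrow> (diff23 ^^ n) (\<lambda>i j k. m w (b j) (d k)) = 0"
    and ad: "\<And>w. w \<in> gens Op \<Longrightarrow> (diff13 ^^ n) (\<lambda>i j k. m w (a i) (d k)) = 0"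
  shows "(diff23 ^^ (3 * n)) (\<lambda>i j k. m v (m u (a i) (b j)) (d k)) = 0"
proof -
  interpret vector_space sc by (rule is_algebraD(1)[OF alg])
  have add_m: "additive (\<lambda>x. m w x z)" if "w \<in> gens Op" for w z
    by standard (simp add: is_algebraD(2)[OF alg that])
  have add_sc: "additive (sc c)" for c
    by standard (simp add: scale_right_distrib)
  define U23 where "U23 = (\<lambda>i j k. \<Sum>i1\<in>gens Op. opr Op sc m (\<rho> 1 i1) (m i1 (b j) (d k)) (a i))"
  define U31 where "U31 = (\<lambda>i j k. \<Sum>i1\<in>gens Op. opr Op sc m (\<rho> 2 i1) (m i1 (d k) (a i)) (b j))"
  show ?thesis
  proof (rule three_term_relation_vanishes[where A = diff13 and B = diff12 and v = U23 and w = U31,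
        OF additive_shift_diff additive_shift_diff shift_diff_commute diff23_eq])
    show "(\<lambda>i j k. m v (m u (a i) (b j)) (d k)) + U23 + U31 = 0"
      using reducing_relation_eq[OF alg fin u v \<rho> \<rho>0] by (simp add: U23_def U31_def fun_eq_iff)
    have "(diff12 ^^ n) (\<lambda>i j k. \<Sum>w\<in>{u}. m v (m w (a i) (b j)) (d k)) = 0"
      by (rule shift_diff_pow_combination_vanishes[where L = "\<lambda>w i j k x. m v x (d k)"])
        (simp_all add: add_m v u ab)
    then show "(diff12 ^^ n) (\<lambda>i j k. m v (m u (a i) (b j)) (d k)) = 0"
      by simp
    show "(diff23 ^^ n) U23 = 0"
      unfolding U23_def
      by (rule shift_diff_pow_combination_vanishes
          [where L = "\<lambda>i1 i j k x. opr Op sc m (\<rho> 1 i1) x (a i)"])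
        (simp_all add: additive_opr_left[OF alg] bd)
    have "(diff13 ^^ n) (\<lambda>i j k. m w (d k) (a i)) = 0" if "w \<in> gens Op" for w
    proof -
      have "(diff13 ^^ n) (\<lambda>i j k. \<Sum>\<kappa>\<in>gens Op. sc (swp Op \<kappa> w) (m \<kappa> (a i) (d k))) = 0"
        by (rule shift_diff_pow_combination_vanishes[where L = "\<lambda>\<kappa> i j k. sc (swp Op \<kappa> w)"])
          (simp_all add: add_sc ad)
      then show ?thesis
        by (simp add: is_algebraD(4)[OF alg that])
    qed
    then show "(diff13 ^^ n) U31 = 0"
      unfolding U31_def
      by (intro shift_diff_pow_combination_vanishes
          [where L = "\<lambda>i1 i j k x. opr Op sc m (\<rho> 2 i1) x (b j)"])
        (simp_all add: additive_opr_left[OF alg])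
  qed
qed

lemma local_dist_nprod_if_annihilated:
  assumes alg: "is_algebra Op sc m"
    and T: "\<And>u v. u \<in> gens Op \<Longrightarrow> v \<in> gens Op \<Longrightarrow>
      (diff23 ^^ M) (\<lambda>i j k. m v (m u (a i) (b j)) (d k)) = 0"
  shows "local_dist Op sc m (nprod Op sc m c n a b) d"
  unfolding local_dist_def
proof (intro allI exI)
  interpret vector_space sc by (rule is_algebraD(1)[OF alg])
  have add_sc: "additive (sc c)" for c
    by standard (simp add: scale_right_distrib)
  fix c' s t
  define G where "G = (\<lambda>i j k. opr Op sc m c' (opr Op sc m c (a i) (b j)) (d k))"
  have "(diff23 ^^ M) (\<lambda>i j k. opr Op sc m c' (m u (a i) (b j)) (d k)) = 0" if "u \<in> gens Op" for u
    unfolding opr_def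
    by (rule shift_diff_pow_combination_vanishes[where L = "\<lambda>v i j k. sc (c' v)"])
      (simp_all add: add_sc T[OF that])
  then have "(diff23 ^^ M)
      (\<lambda>i j k. \<Sum>u\<in>gens Op. sc (c u) (opr Op sc m c' (m u (a i) (b j)) (d k))) = 0"
    by (intro shift_diff_pow_combination_vanishes[where L = "\<lambda>u i j k. sc (c u)"])
      (simp_all add: add_sc)
  then have G: "(diff23 ^^ M) G = 0"
    by (simp add: G_def opr_def[of Op sc m c] opr_sum_scale_left[OF alg])
  have "(\<Sum>k\<le>M. sc ((- 1) ^ k * of_nat (M choose k))
        (opr Op sc m c' (nprod Op sc m c n a b (s + int M - int k)) (d (t + int k)))) =
      (\<Sum>k\<le>M. \<Sum>l\<le>n. sc (signed_binomial M k * signed_binomial n l)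
        (G (int n - int l) (s + int M - int k + int l) (t + int k)))"
    unfolding nprod_def opr_sum_scale_left[OF alg] G_def signed_binomial_def
    by (simp add: scale_sum_right)
  also have "\<dots> = (\<Sum>l\<le>n. sc (signed_binomial n l) ((diff23 ^^ M) G (int n - int l) (s + int l) t))"
    unfolding shift_diff_pow_expand scale_sum_right
    by (subst sum.swap) (intro sum.cong refl; simp add: mult.commute of_nat_diff algebra_simps)
  also have "\<dots> = 0"
    by (simp add: G)
  finally show "(\<Sum>k\<le>M. sc ((- 1) ^ k * of_nat (M choose k))
        (opr Op sc m c' (nprod Op sc m c n a b (s + int M - int k)) (d (t + int k)))) = 0" .
qed

theorem dong_alg_if_shape0_reducible:
  assumes fin: "finite (gens Op)" and alg: "is_algebra Op sc m" and red: "shape0_reducible Op"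
  shows "dong_alg Op sc m"
  unfolding dong_alg_def
proof (intro allI impI)
  fix a b d c n
  assume "local_dist Op sc m a b \<and> local_dist Op sc m b d \<and> local_dist Op sc m a d"
  then have "eventually (\<lambda>n. \<forall>u\<in>gens Op.
      (diff12 ^^ n) (\<lambda>i j k. m u (a i) (b j)) = 0 \<and> (diff23 ^^ n) (\<lambda>i j k. m u (b j) (d k)) = 0 \<and>
      (diff13 ^^ n) (\<lambda>i j k. m u (a i) (d k)) = 0) sequentially" (is "eventually ?annihilated _")
    using pairwise_local_eventually_annihilated[OF alg fin] by simp
  then obtain N where N: "?annihilated N"
    unfolding eventually_sequentially by (meson order_refl)
  have "(diff23 ^^ (3 * N)) (\<lambda>i j k. m v (m u (a i) (b j)) (d k)) = 0"
    if u: "u \<in> gens Op" and v: "v \<in> gens Op" for u v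
  proof -
    obtain \<rho> where \<rho>: "\<rho> \<in> rels Op" and \<rho>0: "\<And>i1 i2. i1 \<in> gens Op \<Longrightarrow> i2 \<in> gens Op \<Longrightarrow>
        \<rho> 0 i1 i2 = (if i1 = u \<and> i2 = v then 1 else 0)"
      using red u v unfolding shape0_reducible_def by blast
    show ?thesis
      by (rule triple_product_annihilated[OF alg fin u v \<rho> \<rho>0]) (use N in blast)+
  qed
  then show "local_dist Op sc m (nprod Op sc m c n a b) d"
    by (rule local_dist_nprod_if_annihilated[OF alg])
qed

section \<open>Dong operads have a reducible first tree shape\<close>

text \<open>The \<open>S\<^sub>3\<close>-action moves the trees of shape \<open>s\<close> to shape 0: a rotation keeps
  the inner vertex, a transposition twists it by the \<open>S\<^sub>2\<close>-action.\<close>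

lemma rels_shape_to_front:
  assumes bq: "is_bq_operad P" and r: "r \<in> rels P" and s: "s < 3"
  shows "\<exists>r'\<in>rels P. \<forall>k1\<in>gens P. \<forall>k2\<in>gens P. r' 0 k1 k2 = r s k1 k2"
proof -
  have act: "act3 P \<sigma> r \<in> rels P" if "\<sigma> permutes {0, 1, 2}" for \<sigma>
    using bq r that unfolding is_bq_operad_def by blast
  have rot: "transpose a b \<circ> transpose a c permutes {0, 1, 2 :: nat}"
    if "a \<in> {0, 1, 2}" "b \<in> {0, 1, 2}" "c \<in> {0, 1, 2}" for a b c
    using that by (intro permutes_compose permutes_swap_id) auto
  consider "s = 0" | "s = 1" | "s = 2" using s by linarith
  then show ?thesis
  proof cases
    case 1
    show ?thesis
      by (rule bexI[OF _ act[OF permutes_id]]) (simp add: 1 act3_def sum_lessThan_3)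
  next
    case 2
    show ?thesis
      by (rule bexI[OF _ act[OF rot[of 0 1 2]]]) (simp_all add: 2 act3_def sum_lessThan_3 transpose_def)
  next
    case 3
    show ?thesis
      by (rule bexI[OF _ act[OF rot[of 0 2 1]]]) (simp_all add: 3 act3_def sum_lessThan_3 transpose_def)
  qed
qed

lemma rels_shape_to_front_swapped:
  assumes bq: "is_bq_operad P" and r: "r \<in> rels P" and s: "s < 3"
  shows "\<exists>r'\<in>rels P. \<forall>k1\<in>gens P. \<forall>k2\<in>gens P. r' 0 k1 k2 = (\<Sum>i\<in>gens P. swp P k1 i * r s i k2)"
proof -
  have act: "act3 P \<sigma> r \<in> rels P" if "\<sigma> permutes {0, 1, 2}" for \<sigma>
    using bq r that unfolding is_bq_operad_def by blast
  have swap: "transpose a b permutes {0, 1, 2 :: nat}" if "a \<in> {0, 1, 2}" "b \<in> {0, 1, 2}" for a b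
    using that by (intro permutes_swap_id) auto
  consider "s = 0" | "s = 1" | "s = 2" using s by linarith
  then show ?thesis
  proof cases
    case 1
    show ?thesis
      by (rule bexI[OF _ act[OF swap[of 0 1]]]) (simp_all add: 1 act3_def sum_lessThan_3 transpose_def)
  next
    case 2
    show ?thesis
      by (rule bexI[OF _ act[OF swap[of 0 2]]]) (simp_all add: 2 act3_def sum_lessThan_3 transpose_def)
  next
    case 3
    show ?thesis
      by (rule bexI[OF _ act[OF swap[of 1 2]]]) (simp_all add: 3 act3_def sum_lessThan_3 transpose_def)
  qed
qed

lemma vector_space_field_mult: "vector_space ((*) :: 'a::field \<Rightarrow> 'a \<Rightarrow> 'a)"
  by unfold_locales (simp_all add: algebra_simps)

lemma (in vector_space) exists_functional_separating_subspace:
  assumes W: "subspace W" and x: "x \<notin> W"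
  obtains g :: "'b \<Rightarrow> 'a" where "module_hom scale (*) g" and "\<forall>w\<in>W. g w = 0" and "g x = 1"
proof -
  interpret field: vector_space "(*) :: 'a \<Rightarrow> 'a \<Rightarrow> 'a"
    by (rule vector_space_field_mult)
  interpret pair: vector_space_pair scale "(*) :: 'a \<Rightarrow> 'a \<Rightarrow> 'a" ..
  obtain B where B: "B \<subseteq> W" "independent B" "W \<subseteq> span B"
    by (rule maximal_independent_subset)
  have "x \<notin> span B"
    using x span_minimal[OF B(1) W] by blast
  then have "independent (insert x B)"
    using B(2) by (rule independent_insertI)
  then obtain g where g: "Vector_Spaces.linear scale (*) g"
      "\<forall>y\<in>insert x B. g y = (if y = x then 1 else 0)"
    using pair.linear_independent_extend[of "insert x B" "\<lambda>y. if y = x then 1 else 0"] by blast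
  have hom: "module_hom scale (*) g"
    using g(1) by (simp add: module_hom_iff_linear)
  show ?thesis
  proof (rule that[OF hom])
    have "g y = 0" if "y \<in> B" for y
      using g(2) that B(1) x by auto
    then show "\<forall>w\<in>W. g w = 0"
      using module_hom.eq_0_on_span[OF hom] B(3) by blast
    show "g x = 1" using g(2) by simp
  qed
qed

lemma sum_fun_apply: "(\<Sum>a\<in>A. f a) x = (\<Sum>a\<in>A. f a x)"
  by (induction A rule: infinite_finite_induct) simp_all

lemma exists_functional_killing_shape0:
  fixes P :: "('k::field, 'i) bq_operad"
  assumes bq: "is_bq_operad P"
    and no: "\<not> (\<exists>\<rho>\<in>rels P. \<forall>i1\<in>gens P. \<forall>i2\<in>gens P.
      \<rho> 0 i1 i2 = (if i1 = p1 \<and> i2 = p2 then 1 else 0))"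
  obtains \<Phi> where "\<forall>r\<in>rels P. (\<Sum>i1\<in>gens P. \<Sum>i2\<in>gens P. r 0 i1 i2 * \<Phi> i1 i2) = 0"
    and "\<Phi> p1 p2 = 1"
proof -
  define sV :: "'k \<Rightarrow> ('i \<Rightarrow> 'i \<Rightarrow> 'k) \<Rightarrow> ('i \<Rightarrow> 'i \<Rightarrow> 'k)" where "sV = (\<lambda>c f x y. c * f x y)"
  interpret V: vector_space sV
    by unfold_locales (simp_all add: sV_def fun_eq_iff algebra_simps)
  define \<delta> :: "'i \<Rightarrow> 'i \<Rightarrow> 'i \<Rightarrow> 'i \<Rightarrow> 'k"
    where "\<delta> p q = (\<lambda>x y. if x = p \<and> y = q then 1 else 0)" for p q
  have fin: "finite (gens P)" using bq by (simp add: is_bq_operad_def)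
  have closed: "(\<lambda>_ _ _. 0) \<in> rels P"
    "\<And>r r'. r \<in> rels P \<Longrightarrow> r' \<in> rels P \<Longrightarrow> (\<lambda>s i1 i2. r s i1 i2 + r' s i1 i2) \<in> rels P"
    "\<And>r c. r \<in> rels P \<Longrightarrow> (\<lambda>s i1 i2. c * r s i1 i2) \<in> rels P"
    using bq unfolding is_bq_operad_def by blast+
  have "V.subspace ((\<lambda>r. r 0) ` rels P)"
    unfolding V.subspace_def
  proof (intro conjI ballI allI)
    show "0 \<in> (\<lambda>r. r 0) ` rels P"
      using closed(1) by (force simp: zero_fun_def)
    show "x + y \<in> (\<lambda>r. r 0) ` rels P" if "x \<in> (\<lambda>r. r 0) ` rels P" "y \<in> (\<lambda>r. r 0) ` rels P" for x y
      using that closed(2) by (auto simp: fun_eq_iff intro!: image_eqI)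
    show "sV c x \<in> (\<lambda>r. r 0) ` rels P" if "x \<in> (\<lambda>r. r 0) ` rels P" for c x
      using that closed(3) by (auto simp: sV_def fun_eq_iff intro!: image_eqI)
  qed
  moreover have "\<delta> p1 p2 \<notin> (\<lambda>r. r 0) ` rels P"
  proof
    assume "\<delta> p1 p2 \<in> (\<lambda>r. r 0) ` rels P"
    then obtain r where "r \<in> rels P" "r 0 = \<delta> p1 p2" by auto
    then show False using no by (auto simp: \<delta>_def)
  qed
  ultimately obtain g :: "('i \<Rightarrow> 'i \<Rightarrow> 'k) \<Rightarrow> 'k" where hom: "module_hom sV (*) g"
    and g0: "\<forall>w\<in>(\<lambda>r. r 0) ` rels P. g w = 0" and g1: "g (\<delta> p1 p2) = 1"
    by (rule V.exists_functional_separating_subspace)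
  have "(\<Sum>i1\<in>gens P. \<Sum>i2\<in>gens P. r 0 i1 i2 * g (\<delta> i1 i2)) = 0" if r: "r \<in> rels P" for r
  proof -
    have "r \<in> free3 (gens P)" using bq r by (auto simp: is_bq_operad_def)
    then have free: "x \<notin> gens P \<or> y \<notin> gens P \<Longrightarrow> r 0 x y = 0" for x y
      by (auto simp: free3_def)
    have decomp: "r 0 = (\<Sum>i1\<in>gens P. \<Sum>i2\<in>gens P. sV (r 0 i1 i2) (\<delta> i1 i2))"
    proof (intro ext)
      fix x y
      have "(\<Sum>i1\<in>gens P. \<Sum>i2\<in>gens P. sV (r 0 i1 i2) (\<delta> i1 i2)) x y =
          (\<Sum>i1\<in>gens P. if i1 = x then (\<Sum>i2\<in>gens P. if i2 = y then r 0 i1 i2 else 0) else 0)"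
        unfolding sum_fun_apply sV_def \<delta>_def by (intro sum.cong refl) (auto intro!: sum.cong)
      also have "\<dots> = r 0 x y"
        using fin free[of x y] by auto
      finally show "r 0 x y = (\<Sum>i1\<in>gens P. \<Sum>i2\<in>gens P. sV (r 0 i1 i2) (\<delta> i1 i2)) x y"
        by simp
    qed
    have "g (r 0) = (\<Sum>i1\<in>gens P. \<Sum>i2\<in>gens P. r 0 i1 i2 * g (\<delta> i1 i2))"
      by (subst decomp) (simp add: module_hom.sum[OF hom] module_hom.scale[OF hom])
    then show ?thesis using g0 r by simp
  qed
  then show ?thesis
    using that[of "\<lambda>i1 i2. g (\<delta> i1 i2)"] g1 by blast
qed

lemma vector_space_smult: "vector_space (smult :: 'a::field \<Rightarrow> 'a poly \<Rightarrow> 'a poly)"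
  by unfold_locales (simp_all add: smult_add_right smult_add_left)

lemma swp_involution_sum:
  assumes bq: "is_bq_operad P" and "vector_space sc" and i: "i \<in> gens P"
  shows "(\<Sum>l\<in>gens P. sc (\<Sum>k\<in>gens P. swp P l k * swp P k i) (f l)) = f i"
proof -
  interpret vector_space sc by fact
  have "(\<Sum>l\<in>gens P. sc (\<Sum>k\<in>gens P. swp P l k * swp P k i) (f l)) =
      (\<Sum>l\<in>gens P. if l = i then f l else 0)"
    using bq i by (intro sum.cong refl) (auto simp: is_bq_operad_def)
  then show ?thesis
    using bq i by (simp add: is_bq_operad_def)
qed

locale dong_counterexample =
  fixes P :: "('k::field, 'i) bq_operad" and idx :: "'i \<Rightarrow> nat" and \<Phi> :: "'i \<Rightarrow> 'i \<Rightarrow> 'k"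
  assumes bq: "is_bq_operad P" and inj_idx: "inj_on idx (gens P)"
    and \<Phi>_shape0: "\<And>r. r \<in> rels P \<Longrightarrow> (\<Sum>i1\<in>gens P. \<Sum>i2\<in>gens P. r 0 i1 i2 * \<Phi> i1 i2) = 0"
begin

lemma finite_gens: "finite (gens P)"
  using bq by (simp add: is_bq_operad_def)

lemma \<Phi>_rels:
  assumes r: "r \<in> rels P" and s: "s < 3"
  shows "(\<Sum>i1\<in>gens P. \<Sum>i2\<in>gens P. r s i1 i2 * \<Phi> i1 i2) = 0"
proof -
  obtain r' where "r' \<in> rels P" "\<forall>k1\<in>gens P. \<forall>k2\<in>gens P. r' 0 k1 k2 = r s k1 k2"
    using rels_shape_to_front[OF bq r s] by blast
  then show ?thesis
    using \<Phi>_shape0[of r'] by simp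
qed

lemma \<Phi>_rels_swapped:
  assumes r: "r \<in> rels P" and s: "s < 3"
  shows "(\<Sum>i1\<in>gens P. \<Sum>i2\<in>gens P. r s i1 i2 * (\<Sum>\<kappa>\<in>gens P. swp P \<kappa> i1 * \<Phi> \<kappa> i2)) = 0"
proof -
  obtain r' where r': "r' \<in> rels P"
    "\<forall>k1\<in>gens P. \<forall>k2\<in>gens P. r' 0 k1 k2 = (\<Sum>i\<in>gens P. swp P k1 i * r s i k2)"
    using rels_shape_to_front_swapped[OF bq r s] by blast
  have "0 = (\<Sum>\<kappa>\<in>gens P. \<Sum>i2\<in>gens P. r' 0 \<kappa> i2 * \<Phi> \<kappa> i2)"
    using \<Phi>_shape0[OF r'(1)] by simp
  also have "\<dots> = (\<Sum>\<kappa>\<in>gens P. \<Sum>i2\<in>gens P. \<Sum>i1\<in>gens P. r s i1 i2 * swp P \<kappa> i1 * \<Phi> \<kappa> i2)"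
    by (simp add: r'(2) sum_distrib_left mult_ac)
  also have "\<dots> = (\<Sum>\<kappa>\<in>gens P. \<Sum>i1\<in>gens P. \<Sum>i2\<in>gens P. r s i1 i2 * swp P \<kappa> i1 * \<Phi> \<kappa> i2)"
    by (rule sum.cong[OF refl], rule sum.swap)
  also have "\<dots> = (\<Sum>i1\<in>gens P. \<Sum>\<kappa>\<in>gens P. \<Sum>i2\<in>gens P. r s i1 i2 * swp P \<kappa> i1 * \<Phi> \<kappa> i2)"
    by (rule sum.swap)
  also have "\<dots> = (\<Sum>i1\<in>gens P. \<Sum>i2\<in>gens P. \<Sum>\<kappa>\<in>gens P. r s i1 i2 * swp P \<kappa> i1 * \<Phi> \<kappa> i2)"
    by (rule sum.cong[OF refl], rule sum.swap)
  also have "\<dots> = (\<Sum>i1\<in>gens P. \<Sum>i2\<in>gens P. r s i1 i2 * (\<Sum>\<kappa>\<in>gens P. swp P \<kappa> i1 * \<Phi> \<kappa> i2))"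
    by (simp add: sum_distrib_left mult_ac)
  finally show ?thesis by simp
qed

text \<open>The algebra lives on \<open>k[x]\<close>, where \<open>1, x, x\<^sup>2\<close> play the roles of \<open>a, b, d\<close>. The
  product \<open>\<mu>\<^sub>\<nu>(1, x)\<close> stores \<open>\<Phi> \<nu> \<mu>\<close> in degree \<open>4 + idx \<mu>\<close>, so that
  \<open>\<mu>\<^sub>\<mu>(\<mu>\<^sub>\<nu>(1, x), x\<^sup>2) = \<Phi> \<nu> \<mu> x\<^sup>3\<close>; apart from what the \<open>S\<^sub>2\<close>-symmetry forces, all
  other products of monomials vanish.\<close>

definition mu01 :: "'i \<Rightarrow> 'k poly" where
  "mu01 \<nu> = (\<Sum>\<mu>\<in>gens P. monom (\<Phi> \<nu> \<mu>) (4 + idx \<mu>))"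

definition mu10 :: "'i \<Rightarrow> 'k poly" where
  "mu10 \<mu> = (\<Sum>\<kappa>\<in>gens P. smult (swp P \<kappa> \<mu>) (mu01 \<kappa>))"

definition top_coeff :: "'i \<Rightarrow> 'k poly \<Rightarrow> 'k poly \<Rightarrow> 'k" where
  "top_coeff \<mu> p q = coeff p (4 + idx \<mu>) * coeff q 2 +
     coeff p 2 * (\<Sum>\<kappa>\<in>gens P. swp P \<kappa> \<mu> * coeff q (4 + idx \<kappa>))"

definition mu :: "'i \<Rightarrow> 'k poly \<Rightarrow> 'k poly \<Rightarrow> 'k poly" where
  "mu \<nu> p q = smult (coeff p 0 * coeff q 1) (mu01 \<nu>) + smult (coeff p 1 * coeff q 0) (mu10 \<nu>)
     + monom (top_coeff \<nu> p q) 3"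

lemma coeff_mu01_low: "n < 4 \<Longrightarrow> coeff (mu01 \<nu>) n = 0"
  by (simp add: mu01_def coeff_sum)

lemma coeff_mu10_low: "n < 4 \<Longrightarrow> coeff (mu10 \<nu>) n = 0"
  by (simp add: mu10_def coeff_sum coeff_mu01_low)

lemma coeff_mu_low: "n < 3 \<Longrightarrow> coeff (mu \<nu> p q) n = 0"
  by (simp add: mu_def coeff_mu01_low coeff_mu10_low)

lemma coeff_mu01:
  assumes "\<mu> \<in> gens P"
  shows "coeff (mu01 \<nu>) (4 + idx \<mu>) = \<Phi> \<nu> \<mu>"
proof -
  have "coeff (mu01 \<nu>) (4 + idx \<mu>) = (\<Sum>\<mu>'\<in>gens P. if \<mu>' = \<mu> then \<Phi> \<nu> \<mu>' else 0)"
    unfolding mu01_def coeff_sum coeff_monom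
    using inj_idx assms by (intro sum.cong refl) (auto dest: inj_onD)
  then show ?thesis
    using finite_gens assms by simp
qed

lemma coeff_mu:
  assumes "\<mu> \<in> gens P"
  shows "coeff (mu \<nu> p q) (4 + idx \<mu>) =
    coeff p 0 * coeff q 1 * \<Phi> \<nu> \<mu> + coeff p 1 * coeff q 0 * (\<Sum>\<kappa>\<in>gens P. swp P \<kappa> \<nu> * \<Phi> \<kappa> \<mu>)"
  by (simp add: mu_def mu10_def coeff_sum coeff_mu01[OF assms])

lemma mu_mu:
  assumes "\<nu>' \<in> gens P"
  shows "mu \<nu>' (mu \<nu> x y) z = monom ((coeff x 0 * coeff y 1 * \<Phi> \<nu> \<nu>' +
    coeff x 1 * coeff y 0 * (\<Sum>\<kappa>\<in>gens P. swp P \<kappa> \<nu> * \<Phi> \<kappa> \<nu>')) * coeff z 2) 3"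
  by (simp add: mu_def[of \<nu>'] top_coeff_def coeff_mu_low coeff_mu[OF assms])

lemma mu_add_left: "mu \<nu> (x + y) z = mu \<nu> x z + mu \<nu> y z"
  by (simp add: mu_def top_coeff_def algebra_simps smult_add_left add_monom[symmetric])

lemma mu_add_right: "mu \<nu> x (y + z) = mu \<nu> x y + mu \<nu> x z"
  by (simp add: mu_def top_coeff_def algebra_simps smult_add_left add_monom[symmetric] sum.distrib)

lemma mu_smult_left: "mu \<nu> (smult c x) y = smult c (mu \<nu> x y)"
  by (simp add: mu_def top_coeff_def algebra_simps smult_add_right smult_monom)

lemma mu_smult_right: "mu \<nu> x (smult c y) = smult c (mu \<nu> x y)"
  by (simp add: mu_def top_coeff_def algebra_simps smult_add_right smult_monom sum_distrib_left)

lemma mu_swap: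
  assumes \<nu>: "\<nu> \<in> gens P"
  shows "mu \<nu> y x = (\<Sum>\<kappa>\<in>gens P. smult (swp P \<kappa> \<nu>) (mu \<kappa> x y))"
proof -
  interpret poly: vector_space "smult :: 'k \<Rightarrow> 'k poly \<Rightarrow> 'k poly"
    by (rule vector_space_smult)
  have mu10: "(\<Sum>\<kappa>\<in>gens P. smult (swp P \<kappa> \<nu>) (mu10 \<kappa>)) = mu01 \<nu>"
  proof -
    have "(\<Sum>\<kappa>\<in>gens P. smult (swp P \<kappa> \<nu>) (mu10 \<kappa>)) =
        (\<Sum>l\<in>gens P. smult (\<Sum>\<kappa>\<in>gens P. swp P l \<kappa> * swp P \<kappa> \<nu>) (mu01 l))"
      unfolding mu10_def poly.scale_sum_right smult_sum
      by (subst sum.swap) (simp add: mult.commute)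
    also have "\<dots> = mu01 \<nu>"
      by (rule swp_involution_sum[OF bq vector_space_smult \<nu>])
    finally show ?thesis .
  qed
  have top: "(\<Sum>\<kappa>\<in>gens P. swp P \<kappa> \<nu> * top_coeff \<kappa> x y) = top_coeff \<nu> y x"
  proof -
    have "(\<Sum>\<kappa>\<in>gens P. swp P \<kappa> \<nu> * top_coeff \<kappa> x y) =
        coeff y 2 * (\<Sum>\<kappa>\<in>gens P. swp P \<kappa> \<nu> * coeff x (4 + idx \<kappa>)) +
        coeff x 2 * (\<Sum>\<kappa>\<in>gens P. \<Sum>l\<in>gens P. swp P l \<kappa> * swp P \<kappa> \<nu> * coeff y (4 + idx l))"
      unfolding top_coeff_def by (simp add: algebra_simps sum.distrib sum_distrib_left)
    also have "(\<Sum>\<kappa>\<in>gens P. \<Sum>l\<in>gens P. swp P l \<kappa> * swp P \<kappa> \<nu> * coeff y (4 + idx l)) =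
        (\<Sum>l\<in>gens P. (\<Sum>\<kappa>\<in>gens P. swp P l \<kappa> * swp P \<kappa> \<nu>) * coeff y (4 + idx l))"
      by (subst sum.swap) (simp add: sum_distrib_right)
    also have "\<dots> = coeff y (4 + idx \<nu>)"
      by (rule swp_involution_sum[OF bq vector_space_field_mult \<nu>])
    finally show ?thesis
      unfolding top_coeff_def by (simp add: algebra_simps)
  qed
  have "(\<Sum>\<kappa>\<in>gens P. smult (swp P \<kappa> \<nu>) (mu \<kappa> x y)) =
      smult (coeff x 0 * coeff y 1) (\<Sum>\<kappa>\<in>gens P. smult (swp P \<kappa> \<nu>) (mu01 \<kappa>)) +
      smult (coeff x 1 * coeff y 0) (\<Sum>\<kappa>\<in>gens P. smult (swp P \<kappa> \<nu>) (mu10 \<kappa>)) +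
      monom (\<Sum>\<kappa>\<in>gens P. swp P \<kappa> \<nu> * top_coeff \<kappa> x y) 3"
    unfolding mu_def
    by (simp add: smult_add_right poly.scale_sum_right sum.distrib smult_monom monom_sum mult.commute
        mult.left_commute)
  also have "\<dots> = mu \<nu> y x"
    unfolding mu10 top mu_def mu10_def[of \<nu>, symmetric] by (simp add: mult.commute add_ac)
  finally show ?thesis by simp
qed

lemma is_algebra_mu: "is_algebra P smult mu"
  unfolding is_algebra_def
proof (intro conjI ballI allI)
  show "vector_space (smult :: 'k \<Rightarrow> 'k poly \<Rightarrow> 'k poly)"
    by (rule vector_space_smult)
  show "mu \<nu> y x = (\<Sum>\<kappa>\<in>gens P. smult (swp P \<kappa> \<nu>) (mu \<kappa> x y))" if "\<nu> \<in> gens P" for \<nu> x y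
    using that by (rule mu_swap)
  show "(\<Sum>s<3. \<Sum>i1\<in>gens P. \<Sum>i2\<in>gens P.
      smult (r s i1 i2) (mu i2 (mu i1 (x s) (x ((s + 1) mod 3))) (x ((s + 2) mod 3)))) = 0"
    if r: "r \<in> rels P" for r x
  proof (rule sum.neutral, rule ballI)
    fix s assume "s \<in> {..<3::nat}"
    then have s: "s < 3" by simp
    define a where "a = coeff (x s) 0"
    define b where "b = coeff (x ((s + 1) mod 3)) 1"
    define c where "c = coeff (x s) 1"
    define d where "d = coeff (x ((s + 1) mod 3)) 0"
    define e where "e = coeff (x ((s + 2) mod 3)) 2"
    have "(\<Sum>i1\<in>gens P. \<Sum>i2\<in>gens P.
        smult (r s i1 i2) (mu i2 (mu i1 (x s) (x ((s + 1) mod 3))) (x ((s + 2) mod 3)))) =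
      (\<Sum>i1\<in>gens P. \<Sum>i2\<in>gens P. monom (r s i1 i2 *
        ((a * b * \<Phi> i1 i2 + c * d * (\<Sum>\<kappa>\<in>gens P. swp P \<kappa> i1 * \<Phi> \<kappa> i2)) * e)) 3)"
      unfolding a_def b_def c_def d_def e_def
      by (intro sum.cong refl) (simp add: mu_mu smult_monom)
    also have "\<dots> = monom (a * b * e * (\<Sum>i1\<in>gens P. \<Sum>i2\<in>gens P. r s i1 i2 * \<Phi> i1 i2) +
        c * d * e * (\<Sum>i1\<in>gens P. \<Sum>i2\<in>gens P. r s i1 i2 *
          (\<Sum>\<kappa>\<in>gens P. swp P \<kappa> i1 * \<Phi> \<kappa> i2))) 3"
      by (simp add: monom_sum[symmetric] algebra_simps sum.distrib sum_distrib_left)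
    finally show "(\<Sum>i1\<in>gens P. \<Sum>i2\<in>gens P.
        smult (r s i1 i2) (mu i2 (mu i1 (x s) (x ((s + 1) mod 3))) (x ((s + 2) mod 3)))) = 0"
      by (simp add: \<Phi>_rels[OF r s] \<Phi>_rels_swapped[OF r s])
  qed
qed (simp_all add: mu_add_left mu_add_right mu_smult_left mu_smult_right)

lemma not_dong:
  assumes p1: "p1 \<in> gens P" and p2: "p2 \<in> gens P" and nz: "\<Phi> p1 p2 \<noteq> 0"
  shows "\<not> dong P TYPE('k poly)"
proof
  assume "dong P TYPE('k poly)"
  then have dong: "dong_alg P smult mu"
    using is_algebra_mu unfolding dong_def by blast
  define e :: "'i \<Rightarrow> 'i \<Rightarrow> 'k" where "e \<nu>\<^sub>0 = (\<lambda>\<nu>. if \<nu> = \<nu>\<^sub>0 then 1 else 0)" for \<nu>\<^sub>0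
  have opr_e: "opr P smult mu (e \<nu>\<^sub>0) x y = mu \<nu>\<^sub>0 x y" if "\<nu>\<^sub>0 \<in> gens P" for \<nu>\<^sub>0 x y
    unfolding e_def by (rule opr_indicator[OF vector_space_smult finite_gens that])
  define a :: "int \<Rightarrow> 'k poly" where "a = (\<lambda>_. 1)"
  define b :: "int \<Rightarrow> 'k poly" where "b = (\<lambda>_. monom 1 1)"
  define d :: "int \<Rightarrow> 'k poly" where "d = (\<lambda>t. if t = 0 then monom 1 2 else 0)"
  have "local_dist P smult mu a b"
    unfolding local_dist_def a_def b_def by (intro allI exI[of _ 1]) simp
  moreover have "local_dist P smult mu b d" "local_dist P smult mu a d"
    unfolding local_dist_def
    by (intro allI exI[of _ 0]; simp add: opr_def mu_def top_coeff_def a_def b_def d_def)+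
  ultimately have "local_dist P smult mu (nprod P smult mu (e p1) 0 a b) d"
    using dong unfolding dong_alg_def by blast
  then obtain N where N: "\<And>s t. (\<Sum>k\<le>N. smult ((-1) ^ k * of_nat (N choose k))
      (opr P smult mu (e p2) (nprod P smult mu (e p1) 0 a b (s + int N - int k)) (d (t + int k)))) = 0"
    unfolding local_dist_def by blast
  have "nprod P smult mu (e p1) 0 a b t = mu01 p1" for t
    by (simp add: nprod_def opr_e[OF p1] a_def b_def mu_def top_coeff_def)
  then have "(\<Sum>k\<le>N. smult ((-1) ^ k * of_nat (N choose k))
      (opr P smult mu (e p2) (mu01 p1) (d (0 + int k)))) = 0"
    using N[of 0 0] by simp
  moreover have "(\<Sum>k\<le>N. smult ((-1) ^ k * of_nat (N choose k))
      (opr P smult mu (e p2) (mu01 p1) (d (0 + int k)))) =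
      (\<Sum>k\<le>N. if k = 0 then mu p2 (mu01 p1) (monom 1 2) else 0)"
    by (intro sum.cong refl) (simp add: opr_e[OF p2] d_def mu_def top_coeff_def)
  moreover have "mu p2 (mu01 p1) (monom 1 2) = monom (\<Phi> p1 p2) 3"
    by (simp add: mu_def top_coeff_def coeff_mu01_low coeff_mu01[OF p2])
  ultimately show False
    using nz by simp
qed
end

theorem shape0_reducible_if_dong:
  fixes P :: "('k::field, 'i) bq_operad"
  assumes bq: "is_bq_operad P" and dong: "dong P TYPE('k poly)"
  shows "shape0_reducible P"
  unfolding shape0_reducible_def
proof (intro ballI, rule ccontr)
  fix p1 p2 assume p1: "p1 \<in> gens P" and p2: "p2 \<in> gens P"
    and no: "\<not> (\<exists>\<rho>\<in>rels P. \<forall>i1\<in>gens P. \<forall>i2\<in>gens P.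
      \<rho> 0 i1 i2 = (if i1 = p1 \<and> i2 = p2 then 1 else 0))"
  obtain \<Phi> where \<Phi>: "\<forall>r\<in>rels P. (\<Sum>i1\<in>gens P. \<Sum>i2\<in>gens P. r 0 i1 i2 * \<Phi> i1 i2) = 0"
    and \<Phi>1: "\<Phi> p1 p2 = 1"
    by (rule exists_functional_killing_shape0[OF bq no])
  have "finite (gens P)"
    using bq by (simp add: is_bq_operad_def)
  then obtain idx :: "'i \<Rightarrow> nat" where "inj_on idx (gens P)"
    using finite_imp_inj_to_nat_seg by blast
  then interpret dong_counterexample P idx \<Phi>
    using bq \<Phi> by (simp add: dong_counterexample_def)
  show False
    using not_dong[OF p1 p2] \<Phi>1 dong by simp
qed

section \<open>The black product\<close>

lemma tensor_rel_in_black: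
  assumes "r \<in> rels P" and "q \<in> rels Q"
  shows "(\<lambda>s u v. r s (fst u) (fst v) * q s (snd u) (snd v)) \<in> rels (black P Q)"
proof -
  define \<rho> where "\<rho> = (\<lambda>s u v. r s (fst u) (fst v) * q s (snd u) (snd v))"
  have "\<rho> \<in> lin_span {(\<lambda>s u v. r s (fst u) (fst v) * q s (snd u) (snd v)) | r q.
      r \<in> rels P \<and> q \<in> rels Q}"
    unfolding lin_span_def
    by (intro CollectI exI[of _ "{\<rho>}"] exI[of _ "\<lambda>_. 1"] conjI) (use assms in \<open>auto simp: \<rho>_def\<close>)
  then show ?thesis
    by (simp add: black_def \<rho>_def)
qed

lemma shape0_reducible_black:
  assumes "shape0_reducible P" and "shape0_reducible Q"
  shows "shape0_reducible (black P Q)"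
  unfolding shape0_reducible_def
proof (intro ballI)
  fix u v assume "u \<in> gens (black P Q)" "v \<in> gens (black P Q)"
  then have uv: "fst u \<in> gens P" "fst v \<in> gens P" "snd u \<in> gens Q" "snd v \<in> gens Q"
    by (auto simp: black_def)
  moreover obtain r where "r \<in> rels P"
    and "\<forall>i1\<in>gens P. \<forall>i2\<in>gens P. r 0 i1 i2 = (if i1 = fst u \<and> i2 = fst v then 1 else 0)"
    using assms(1) uv unfolding shape0_reducible_def by blast
  moreover obtain q where "q \<in> rels Q"
    and "\<forall>i1\<in>gens Q. \<forall>i2\<in>gens Q. q 0 i1 i2 = (if i1 = snd u \<and> i2 = snd v then 1 else 0)"
    using assms(2) uv unfolding shape0_reducible_def by blast
  ultimately show "\<exists>\<rho>\<in>rels (black P Q). \<forall>i1\<in>gens (black P Q). \<forall>i2\<in>gens (black P Q).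
      \<rho> 0 i1 i2 = (if i1 = u \<and> i2 = v then 1 else 0)"
    by (intro bexI[OF _ tensor_rel_in_black]) (auto simp: black_def prod_eq_iff)
qed

theorem mainTheorem4:
  fixes P :: "('k::field, 'i) bq_operad" and Q :: "('k, 'j) bq_operad"
  assumes "is_bq_operad P" and "is_bq_operad Q"
    and "dong P TYPE('k poly)" and "dong Q TYPE('k poly)"
  shows "dong (black P Q) TYPE('a::ab_group_add)"
proof -
  have "finite (gens (black P Q))"
    using assms(1,2) by (simp add: is_bq_operad_def black_def)
  moreover have "shape0_reducible (black P Q)"
    using assms by (intro shape0_reducible_black shape0_reducible_if_dong)
  ultimately show ?thesis
    unfolding dong_def by (blast intro: dong_alg_if_shape0_reducible)
qed

end
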